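(* Let $f \in L^1([-\pi,\pi])$ have real Fourier coefficients. Write $f = f_R + \mathrm{i} f_I$ with $f_R, f_I$ real-valued, and assume $f_R$ is essentially positive. Let $A_n := A_n(f)\in\mathbb{R}^{n\times n}$ be the Toeplitz matrix generated by $f$, let $A_R := A_n(f_R) = (A_n + A_n^T)/2$, and let $Y_n$ be the $n\times n$ exchange matrix. Let \[S := \operatorname*{ess\,sup}_{\theta\in[-\pi,\pi]} \left|\frac{f_I(\theta)}{f_R(\theta)}\right|.\] Then there is $\epsilon$ with $0\le \epsilon\le S$, and $\epsilon<S$ whenever $f_I$ is not zero almost everywhere, such that all eigenvalues of the symmetric matrix $A_R^{-1/2}(Y_n A_n)A_R^{-1/2}$ lie in $[-1-\epsilon,-1]\cup[1,1+\epsilon]$.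
   Context: For $g\in L^1([-\pi,\pi])$, $A_n(g)$ denotes the $n\times n$ Toeplitz matrix whose $(i,j)$ entry is $\frac{1}{2\pi}\int_{-\pi}^{\pi} g(\theta)e^{-\mathrm{i}(i-j)\theta}\,d\theta$. The exchange matrix $Y_n$ has $(Y_n)_{ij}=1$ if $i+j=n+1$ and $0$ otherwise. "Essentially positive" means positive almost everywhere. $A_R$ is symmetric positive definite, and $A_R^{-1/2}$ is the inverse of its symmetric positive definite square root. *)

theory Defs
  imports "HOL-Probability.Probability" "Jordan_Normal_Form.Matrix" "Jordan_Normal_Form.Char_Poly"
begin

definition fourier_coeff :: "(real \<Rightarrow> complex) \<Rightarrow> int \<Rightarrow> complex" where
  "fourier_coeff g k = complex_of_real (1 / (2 * pi)) *
     (LINT t:{-pi..pi}|lborel. g t * exp (- (\<i> * of_int k * complex_of_real t)))"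

definition toeplitz :: "nat \<Rightarrow> (real \<Rightarrow> complex) \<Rightarrow> complex mat" where
  "toeplitz n g = mat n n (\<lambda>(i, j). fourier_coeff g (int i - int j))"

definition exchange_mat :: "nat \<Rightarrow> real mat" where
  "exchange_mat n = mat n n (\<lambda>(i, j). if i + j + 1 = n then 1 else 0)"

definition sym_pos_def :: "nat \<Rightarrow> real mat \<Rightarrow> bool" where
  "sym_pos_def n A \<longleftrightarrow> A \<in> carrier_mat n n \<and> transpose_mat A = A \<and>
     (\<forall>v \<in> carrier_vec n. v \<noteq> 0\<^sub>v n \<longrightarrow> v \<bullet> (A *\<^sub>v v) > 0)"

definition spd_sqrt :: "nat \<Rightarrow> real mat \<Rightarrow> real mat" where
  "spd_sqrt n A = (THE S. sym_pos_def n S \<and> S * S = A)"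

definition mat_inv :: "nat \<Rightarrow> real mat \<Rightarrow> real mat" where
  "mat_inv n A = (THE B. B \<in> carrier_mat n n \<and> A * B = 1\<^sub>m n \<and> B * A = 1\<^sub>m n)"

definition spd_inv_sqrt :: "nat \<Rightarrow> real mat \<Rightarrow> real mat" where
  "spd_inv_sqrt n A = mat_inv n (spd_sqrt n A)"

end

(* Write A = A_R + K, where A_R = A_n(f_R) is symmetric positive definite and x^T K x = 0 for all x.
   If A_R^(-1/2) Y A A_R^(-1/2) x = lam x, then y = A_R^(-1/2) x solves Y A y = lam A_R y.  Toeplitz
   matrices are persymmetric, Y A_R Y = A_R, so w = A_R^(-1) A y = y + z with z = A_R^(-1) K y
   satisfies Y w = lam y, and comparing A_R-norms gives
     lam^2 y^T A_R y = w^T A_R w = y^T A_R y + z^T A_R z,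
   hence lam^2 >= 1.  Against the trigonometric polynomials p_a(t) = sum_j a_j e^(ijt) the forms are
   a^T A_R b = (1/2pi) int f_R Re(conj(p_a) p_b) and a^T K b = -(1/2pi) int f_I Im(conj(p_a) p_b), so
   |f_I| <= s f_R and AM-GM give 2 z^T K y <= z^T A_R z + s^2 y^T A_R y, i.e. z^T A_R z <= s^2 y^T A_R y
   and lam^2 <= 1 + s^2.  With s = S this is the bound eps = sqrt(1 + S^2) - 1, which is < S if S > 0. *)

theory Submission
  imports Defs
begin

no_notation vec_nth (infixl "$" 90)
no_notation inner (infix "\<bullet>" 70)

section \<open>Real symmetric matrices\<close>

lemma mult_mat_vec_unit_vec:
  fixes M :: "'a::comm_ring_1 mat"
  assumes "M \<in> carrier_mat n n" "i < n" "j < n"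
  shows "(M *\<^sub>v unit_vec n j) $ i = M $$ (i, j)"
  using assms by (simp add: scalar_prod_def row_def if_distrib[of "\<lambda>x. _ * x"] cong: if_cong)

lemma conjugate_mult_mat_vec_of_real:
  fixes A :: "real mat" and v :: "complex vec"
  assumes "A \<in> carrier_mat n n" "v \<in> carrier_vec n"
  shows "conjugate (map_mat complex_of_real A *\<^sub>v v) = map_mat complex_of_real A *\<^sub>v conjugate v"
  using assms by (intro eq_vecI) (auto simp: scalar_prod_def)

lemma real_symmetric_has_eigenvector:
  fixes A :: "real mat"
  assumes A: "A \<in> carrier_mat n n" and sym: "A\<^sup>T = A" and n: "n > 0"
  obtains e v where "v \<in> carrier_vec n" "v \<noteq> 0\<^sub>v n" "A *\<^sub>v v = e \<cdot>\<^sub>v v"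
proof -
  define Ac where "Ac = map_mat complex_of_real A"
  have Ac: "Ac \<in> carrier_mat n n" "Ac\<^sup>T = Ac"
    using A sym by (auto simp: Ac_def map_mat_transpose)
  have cp: "char_poly Ac = map_poly of_real (char_poly A)"
    using of_real_hom.char_poly_hom[OF A] by (simp add: Ac_def)
  have "\<not> constant (poly (char_poly Ac))"
    using degree_monic_char_poly[OF Ac(1)] n constant_degree[of "char_poly Ac"] by simp
  then obtain z where z: "poly (char_poly Ac) z = 0"
    using fundamental_theorem_of_algebra by blast
  then obtain v where v: "v \<in> carrier_vec n" "v \<noteq> 0\<^sub>v n" "Ac *\<^sub>v v = z \<cdot>\<^sub>v v"
    using eigenvalue_root_char_poly[OF Ac(1)] Ac(1) unfolding eigenvalue_def eigenvector_def by auto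
  have q: "conjugate v \<bullet> v \<noteq> 0"
    using conjugate_square_eq_0_vec[OF v(1)] conjugate_vec_sprod_comm[OF v(1) v(1)] v(2) by simp
  have "z * (conjugate v \<bullet> v) = conjugate v \<bullet> (Ac *\<^sub>v v)"
    using v by simp
  also have "\<dots> = (Ac *\<^sub>v conjugate v) \<bullet> v"
    using transpose_vec_mult_scalar[OF Ac(1) v(1), of "conjugate v"] Ac(2) v(1) by simp
  also have "Ac *\<^sub>v conjugate v = cnj z \<cdot>\<^sub>v conjugate v"
    using conjugate_mult_mat_vec_of_real[OF A v(1)] v(3) by (simp add: Ac_def conjugate_smult_vec)
  also have "(cnj z \<cdot>\<^sub>v conjugate v) \<bullet> v = cnj z * (conjugate v \<bullet> v)"
    using v(1) by simp
  finally have "cnj z = z"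
    using q by simp
  then have "z = of_real (Re z)"
    by (metis complex_is_Real_iff Reals_cnj_iff complex_eq_iff Im_complex_of_real Re_complex_of_real)
  then have "poly (char_poly A) (Re z) = 0"
    using z cp of_real_hom.poly_map_poly[of "char_poly A" "Re z"] by (metis of_real_eq_0_iff)
  then have "\<exists>w. w \<in> carrier_vec n \<and> w \<noteq> 0\<^sub>v n \<and> A *\<^sub>v w = Re z \<cdot>\<^sub>v w"
    using eigenvalue_root_char_poly[OF A] A unfolding eigenvalue_def eigenvector_def by auto
  then show ?thesis
    using that by blast
qed

lemma finite_eigenvalues:
  fixes H :: "real mat"
  assumes "H \<in> carrier_mat n n"
  shows "finite {lam. eigenvalue H lam}"
proof -
  have "char_poly H \<noteq> 0"
    using degree_monic_char_poly[OF assms] by auto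
  then have "finite {x. poly (char_poly H) x = 0}"
    by (rule poly_roots_finite)
  then show ?thesis
    using eigenvalue_root_char_poly[OF assms] by (simp add: finite_subset)
qed

lemma reflection_mat_involution:
  fixes w :: "real vec"
  assumes w: "w \<in> carrier_vec n" and c: "c * (c * (w \<bullet> w) - 2) = 0"
  defines "H \<equiv> mat n n (\<lambda>(i,j). (if i = j then 1 else 0) - c * w$i * w$j)"
  shows "H * H = 1\<^sub>m n"
proof (rule eq_matI)
  fix i j assume "i < dim_row (1\<^sub>m n)" "j < dim_col (1\<^sub>m n)"
  then have i: "i < n" and j: "j < n" by auto
  have "(H * H) $$ (i, j) = (\<Sum>k<n. (if i = k then 1 else 0) * (if k = j then 1 else 0)
      - (if i = k then 1 else 0) * (c * w$k * w$j) - (if k = j then 1 else 0) * (c * w$i * w$k)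
      + c * c * w$i * w$j * (w$k * w$k))"
    using i j by (auto simp: H_def scalar_prod_def lessThan_atLeast0 algebra_simps intro!: sum.cong)
  also have "\<dots> = (if i = j then 1 else 0) - c * w$i * w$j - c * w$i * w$j
      + c * c * w$i * w$j * (w \<bullet> w)"
    using i j w by (simp add: sum.distrib sum_subtractf sum_distrib_left[symmetric] scalar_prod_def
        lessThan_atLeast0 if_distrib[of "\<lambda>x. x * _"] cong: if_cong)
  also have "\<dots> = (if i = j then 1 else 0) + w$i * w$j * (c * (c * (w \<bullet> w) - 2))"
    by (simp add: algebra_simps)
  finally show "(H * H) $$ (i, j) = 1\<^sub>m n $$ (i, j)"
    using i j c by simp
qed (simp_all add: H_def)

lemma householder_reflection:
  fixes u v :: "real vec"
  assumes u: "u \<in> carrier_vec n" "u \<bullet> u = 1" and v: "v \<in> carrier_vec n" "v \<bullet> v = 1"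
  obtains H where "H \<in> carrier_mat n n" "H\<^sup>T = H" "H * H = 1\<^sub>m n" "H *\<^sub>v v = u"
proof -
  define w where "w = v - u"
  define c where "c = 2 / (w \<bullet> w)"
  define H where "H = mat n n (\<lambda>(i,j). (if i = j then 1 else 0) - c * w$i * w$j)"
  have w: "w \<in> carrier_vec n" using u v by (simp add: w_def)
  have H: "H \<in> carrier_mat n n" "H\<^sup>T = H" by (auto simp: H_def)
  \<comment> \<open>\<open>c = 0\<close> if \<open>w = 0\<close> (division by zero), and \<open>c (w \<bullet> w) = 2\<close> otherwise\<close>
  have "c * (c * (w \<bullet> w) - 2) = 0"
    by (cases "w \<bullet> w = 0") (auto simp: c_def)
  then have "H * H = 1\<^sub>m n"
    unfolding H_def by (rule reflection_mat_involution[OF w])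
  moreover have "H *\<^sub>v v = u"
  proof (rule eq_vecI)
    fix i assume "i < dim_vec u"
    then have i: "i < n" using u by simp
    have "(H *\<^sub>v v) $ i = (\<Sum>k<n. (if i = k then v$k else 0) - c * w$i * (w$k * v$k))"
      using i v by (auto simp: H_def scalar_prod_def lessThan_atLeast0 left_diff_distrib intro!: sum.cong)
    also have "\<dots> = v$i - c * (w \<bullet> v) * w$i"
      using i v by (simp add: sum_subtractf sum_distrib_left[symmetric] scalar_prod_def lessThan_atLeast0)
    finally have Hv: "(H *\<^sub>v v) $ i = v$i - c * (w \<bullet> v) * w$i" .
    have "w \<bullet> w = 2 * (w \<bullet> v)"
      using u v w by (simp add: w_def minus_scalar_prod_distrib scalar_prod_minus_distrib comm_scalar_prod[of u n v])
    then have "w$i = 0 \<or> c * (w \<bullet> v) = 1"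
      using w i by (auto simp: c_def conjugate_square_eq_0_vec[of w n, simplified])
    then show "(H *\<^sub>v v) $ i = u $ i"
      using Hv i u v by (auto simp: w_def)
  qed (use u H in auto)
  ultimately show ?thesis using H that by blast
qed

lemma symmetric_eigenvector_unit_vec_block:
  fixes A :: "real mat"
  assumes A: "A \<in> carrier_mat (Suc m) (Suc m)" "A\<^sup>T = A"
    and e: "A *\<^sub>v unit_vec (Suc m) 0 = e \<cdot>\<^sub>v unit_vec (Suc m) 0"
  shows "A = four_block_mat (mat 1 1 (\<lambda>_. e)) (0\<^sub>m 1 m) (0\<^sub>m m 1) (mat m m (\<lambda>(i,j). A $$ (Suc i, Suc j)))"
proof -
  have col: "A $$ (i, 0) = (if i = 0 then e else 0)" if "i < Suc m" for i
    using mult_mat_vec_unit_vec[OF A(1) that, of 0] e that by (cases "i = 0") auto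
  have "A $$ (0, j) = (if j = 0 then e else 0)" if "j < Suc m" for j
    using col[OF that] A that by (metis carrier_matD index_transpose_mat(1) zero_less_Suc)
  then show ?thesis
    using A(1) col by (intro eq_matI) (auto simp: not_less_eq)
qed

lemma householder_deflation:
  fixes A :: "real mat"
  assumes A: "A \<in> carrier_mat (Suc m) (Suc m)" "A\<^sup>T = A"
  obtains H e A3 where "H \<in> carrier_mat (Suc m) (Suc m)" "H\<^sup>T = H" "H * H = 1\<^sub>m (Suc m)"
    "A3 \<in> carrier_mat m m" "A3\<^sup>T = A3"
    "H * A * H = four_block_mat (mat 1 1 (\<lambda>_. e)) (0\<^sub>m 1 m) (0\<^sub>m m 1) A3"
proof -
  let ?n = "Suc m" and ?e0 = "unit_vec (Suc m) 0"
  obtain e v where v: "v \<in> carrier_vec ?n" "v \<noteq> 0\<^sub>v ?n" "A *\<^sub>v v = e \<cdot>\<^sub>v v"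
    using real_symmetric_has_eigenvector[OF A] by blast
  define u where "u = (1 / sqrt (v \<bullet> v)) \<cdot>\<^sub>v v"
  have vv: "v \<bullet> v > 0"
    using conjugate_square_greater_0_vec[OF v(1)] v(2) by simp
  have u: "u \<in> carrier_vec ?n" "u \<bullet> u = 1" "A *\<^sub>v u = e \<cdot>\<^sub>v u"
    using v vv by (auto simp: u_def mult_mat_vec[OF A(1) v(1)] smult_smult_assoc mult.commute)
  obtain H where H: "H \<in> carrier_mat ?n ?n" "H\<^sup>T = H" "H * H = 1\<^sub>m ?n" "H *\<^sub>v ?e0 = u"
    using householder_reflection[OF u(1,2), of ?e0] by auto
  define A' where "A' = H * A * H"
  have "A'\<^sup>T = H\<^sup>T * (H * A)\<^sup>T"
    unfolding A'_def by (rule transpose_mult) (use A H in auto)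
  also have "(H * A)\<^sup>T = A * H"
    using A H by (simp add: transpose_mult[of H ?n ?n A ?n])
  finally have A': "A' \<in> carrier_mat ?n ?n" "A'\<^sup>T = A'"
    using A H by (auto simp: A'_def assoc_mult_mat[of _ ?n ?n _ ?n _ ?n])
  have "A' *\<^sub>v ?e0 = H *\<^sub>v (A *\<^sub>v u)"
    using A H by (simp add: A'_def assoc_mult_mat_vec[of _ ?n ?n _ ?n])
  also have "\<dots> = e \<cdot>\<^sub>v (H *\<^sub>v u)"
    using H u by (simp add: mult_mat_vec)
  also have "H *\<^sub>v u = (H * H) *\<^sub>v ?e0"
    unfolding H(4)[symmetric] by (rule assoc_mult_mat_vec[symmetric]) (use H in auto)
  finally have "A' *\<^sub>v ?e0 = e \<cdot>\<^sub>v ?e0"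
    using H by simp
  define A3 where "A3 = mat m m (\<lambda>(i,j). A' $$ (Suc i, Suc j))"
  have "A' = four_block_mat (mat 1 1 (\<lambda>_. e)) (0\<^sub>m 1 m) (0\<^sub>m m 1) A3"
    unfolding A3_def by (rule symmetric_eigenvector_unit_vec_block[OF A' \<open>A' *\<^sub>v ?e0 = e \<cdot>\<^sub>v ?e0\<close>])
  moreover have "A3 \<in> carrier_mat m m" "A3\<^sup>T = A3"
    using A' by (auto simp: A3_def intro!: eq_matI) (metis Suc_less_eq carrier_matD index_transpose_mat(1))
  ultimately show ?thesis
    using that H by (simp add: A'_def)
qed

definition orthonormal_mat :: "nat \<Rightarrow> 'a::comm_ring_1 mat \<Rightarrow> bool" where
  "orthonormal_mat n U \<longleftrightarrow> U \<in> carrier_mat n n \<and> U\<^sup>T * U = 1\<^sub>m n \<and> U * U\<^sup>T = 1\<^sub>m n"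

lemma orthonormal_mat_mult:
  assumes P: "orthonormal_mat n P" and Q: "orthonormal_mat n Q"
  shows "orthonormal_mat n (P * Q)"
proof -
  have c: "P \<in> carrier_mat n n" "Q \<in> carrier_mat n n" "P\<^sup>T \<in> carrier_mat n n" "Q\<^sup>T \<in> carrier_mat n n"
    using P Q by (auto simp: orthonormal_mat_def)
  have T: "(P * Q)\<^sup>T = Q\<^sup>T * P\<^sup>T"
    using c by (simp add: transpose_mult)
  have "Q\<^sup>T * P\<^sup>T * (P * Q) = Q\<^sup>T * (P\<^sup>T * P) * Q"
    using c by (simp add: assoc_mult_mat[of _ n n _ n _ n])
  moreover have "P * Q * (Q\<^sup>T * P\<^sup>T) = P * (Q * Q\<^sup>T) * P\<^sup>T"
    using c by (simp add: assoc_mult_mat[of _ n n _ n _ n])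
  ultimately show ?thesis
    using P Q c by (simp add: orthonormal_mat_def T)
qed

lemma mult_conj_transpose:
  fixes P Q D :: "'a::comm_ring_1 mat"
  assumes "P \<in> carrier_mat n n" "Q \<in> carrier_mat n n" "D \<in> carrier_mat n n"
  shows "(P * Q) * D * (P * Q)\<^sup>T = P * (Q * D * Q\<^sup>T) * P\<^sup>T"
  using assms by (simp add: transpose_mult[of P n n Q n] assoc_mult_mat[of _ n n _ n _ n])

lemma transpose_conj:
  fixes U D :: "'a::comm_ring_1 mat"
  assumes U: "U \<in> carrier_mat n n" and D: "D \<in> carrier_mat n n"
  shows "(U * D * U\<^sup>T)\<^sup>T = U * D\<^sup>T * U\<^sup>T"
proof -
  have "(U * D * U\<^sup>T)\<^sup>T = (U\<^sup>T)\<^sup>T * (U * D)\<^sup>T"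
    by (rule transpose_mult) (use U D in auto)
  also have "(U * D)\<^sup>T = D\<^sup>T * U\<^sup>T"
    using U D by (simp add: transpose_mult[of U n n D n])
  finally show ?thesis
    using U D by (simp add: assoc_mult_mat[of _ n n _ n _ n])
qed

lemma orthonormal_conj_mult:
  assumes U: "orthonormal_mat n U" and "X \<in> carrier_mat n n" "Y \<in> carrier_mat n n"
  shows "(U * X * U\<^sup>T) * (U * Y * U\<^sup>T) = U * (X * Y) * U\<^sup>T"
proof -
  have Uc: "U \<in> carrier_mat n n" "U\<^sup>T * U = 1\<^sub>m n" using U by (auto simp: orthonormal_mat_def)
  have "U\<^sup>T * (U * Z) = Z" if "Z \<in> carrier_mat n n" for Z
    using Uc that by (simp add: assoc_mult_mat[of "U\<^sup>T" n n U n Z n, symmetric])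
  then show ?thesis
    using Uc assms by (simp add: assoc_mult_mat[of _ n n _ n _ n])
qed

lemma four_block_mat_diag:
  "four_block_mat (mat 1 1 (\<lambda>_. e)) (0\<^sub>m 1 m) (0\<^sub>m m 1) (mat_diag m d)
     = mat_diag (Suc m) (\<lambda>i. if i = 0 then e else d (i - 1))"
  by (intro eq_matI) (auto simp: mat_diag_def)

lemma orthonormal_block_extend:
  fixes U3 :: "real mat" and e :: real and d :: "nat \<Rightarrow> real"
  assumes U3: "orthonormal_mat m U3"
  defines "F \<equiv> four_block_mat (1\<^sub>m 1) (0\<^sub>m 1 m) (0\<^sub>m m 1) U3"
  shows "orthonormal_mat (Suc m) F"
    and "F * mat_diag (Suc m) (\<lambda>i. if i = 0 then e else d (i - 1)) * F\<^sup>T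
           = four_block_mat (mat 1 1 (\<lambda>_. e)) (0\<^sub>m 1 m) (0\<^sub>m m 1) (U3 * mat_diag m d * U3\<^sup>T)"
proof -
  have U: "U3 \<in> carrier_mat m m" "U3\<^sup>T * U3 = 1\<^sub>m m" "U3 * U3\<^sup>T = 1\<^sub>m m"
    using U3 by (auto simp: orthonormal_mat_def)
  have F: "F \<in> carrier_mat (Suc m) (Suc m)"
    using four_block_carrier_mat[OF one_carrier_mat[of 1] U(1)] by (simp add: F_def)
  have FT: "F\<^sup>T = four_block_mat (1\<^sub>m 1) (0\<^sub>m 1 m) (0\<^sub>m m 1) U3\<^sup>T"
    using U by (simp add: F_def transpose_four_block_mat[of _ 1 1 _ m _ m])
  have "F\<^sup>T * F = 1\<^sub>m (Suc m)" "F * F\<^sup>T = 1\<^sub>m (Suc m)"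
    using U unfolding FT by (simp_all add: F_def mult_four_block_mat[of _ 1 1 _ m _ m _ _ 1 _ m])
  then show "orthonormal_mat (Suc m) F"
    using F by (simp add: orthonormal_mat_def)
  have FD: "F * mat_diag (Suc m) (\<lambda>i. if i = 0 then e else d (i - 1))
      = four_block_mat (mat 1 1 (\<lambda>_. e)) (0\<^sub>m 1 m) (0\<^sub>m m 1) (U3 * mat_diag m d)"
    unfolding F_def four_block_mat_diag[symmetric] using U
    by (simp add: mult_four_block_mat[of _ 1 1 _ m _ m _ _ 1 _ m] left_mult_zero_mat[OF mat_diag_dim])
  show "F * mat_diag (Suc m) (\<lambda>i. if i = 0 then e else d (i - 1)) * F\<^sup>T
      = four_block_mat (mat 1 1 (\<lambda>_. e)) (0\<^sub>m 1 m) (0\<^sub>m m 1) (U3 * mat_diag m d * U3\<^sup>T)"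
    unfolding FD FT using U mult_carrier_mat[OF U(1) mat_diag_dim, of d]
    by (subst mult_four_block_mat[of _ 1 1 _ m _ m _ _ 1 _ m]) (auto simp: carrier_matD[OF mat_diag_dim])
qed

lemma real_symmetric_diagonalization:
  fixes A :: "real mat"
  assumes "A \<in> carrier_mat n n" "A\<^sup>T = A"
  shows "\<exists>U d. orthonormal_mat n U \<and> A = U * mat_diag n d * U\<^sup>T"
  using assms
proof (induction n arbitrary: A)
  case 0
  then show ?case
    by (intro exI[of _ "1\<^sub>m 0"]) (auto simp: orthonormal_mat_def intro!: eq_matI)
next
  case (Suc m)
  let ?n = "Suc m"
  note A = Suc.prems
  obtain H e A3 where H: "H \<in> carrier_mat ?n ?n" "H\<^sup>T = H" "H * H = 1\<^sub>m ?n"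
    and A3: "A3 \<in> carrier_mat m m" "A3\<^sup>T = A3"
    and HAH: "H * A * H = four_block_mat (mat 1 1 (\<lambda>_. e)) (0\<^sub>m 1 m) (0\<^sub>m m 1) A3"
    by (rule householder_deflation[OF A])
  obtain U3 d3 where U3: "orthonormal_mat m U3" and A3_diag: "A3 = U3 * mat_diag m d3 * U3\<^sup>T"
    using Suc.IH[OF A3] by blast
  define F where "F = four_block_mat (1\<^sub>m 1) (0\<^sub>m 1 m) (0\<^sub>m m 1) U3"
  define d where "d = (\<lambda>i. if i = 0 then e else d3 (i - 1))"
  note F = orthonormal_block_extend(1)[OF U3, folded F_def]
    orthonormal_block_extend(2)[OF U3, where e = e and d = d3, folded F_def d_def]
  have HF: "orthonormal_mat ?n (H * F)"
    using H F(1) by (intro orthonormal_mat_mult) (auto simp: orthonormal_mat_def)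
  have "(H * F) * mat_diag ?n d * (H * F)\<^sup>T = H * (H * A * H) * H"
    using mult_conj_transpose[OF H(1) _ mat_diag_dim] F H(2)
    by (simp add: HAH A3_diag orthonormal_mat_def)
  also have "\<dots> = A"
  proof -
    have "H * (H * A) = A"
      using H A by (simp add: assoc_mult_mat[of H ?n ?n H ?n A ?n, symmetric])
    then show ?thesis
      using H A by (simp add: assoc_mult_mat[of _ ?n ?n _ ?n _ ?n])
  qed
  finally show ?case
    using HF by auto
qed

lemma orthonormal_conj_diag_eigenvector:
  fixes U :: "'a::field mat"
  assumes U: "orthonormal_mat n U" and A: "A = U * mat_diag n d * U\<^sup>T" and i: "i < n"
  shows "U *\<^sub>v unit_vec n i \<noteq> 0\<^sub>v n" and "A *\<^sub>v (U *\<^sub>v unit_vec n i) = d i \<cdot>\<^sub>v (U *\<^sub>v unit_vec n i)"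
proof -
  have Uc: "U \<in> carrier_mat n n" "U\<^sup>T * U = 1\<^sub>m n" using U by (auto simp: orthonormal_mat_def)
  have UtU: "U\<^sup>T *\<^sub>v (U *\<^sub>v unit_vec n i) = unit_vec n i"
    using Uc by (simp add: assoc_mult_mat_vec[of _ n n _ n, symmetric])
  show "U *\<^sub>v unit_vec n i \<noteq> 0\<^sub>v n"
  proof
    assume "U *\<^sub>v unit_vec n i = 0\<^sub>v n"
    then have "unit_vec n i = U\<^sup>T *\<^sub>v 0\<^sub>v n"
      using UtU by simp
    also have "\<dots> = 0\<^sub>v n"
      using Uc by (intro eq_vecI) auto
    finally show False
      using i by simp
  qed
  have "mat_diag n d *\<^sub>v unit_vec n i = d i \<cdot>\<^sub>v unit_vec n i"
    using i by (intro eq_vecI) (auto simp: mult_mat_vec_unit_vec mat_diag_def)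
  then show "A *\<^sub>v (U *\<^sub>v unit_vec n i) = d i \<cdot>\<^sub>v (U *\<^sub>v unit_vec n i)"
    using Uc UtU by (simp add: A assoc_mult_mat_vec[of _ n n _ n] mult_mat_vec[OF Uc(1) unit_vec_carrier[of n]])
qed

section \<open>Positive definite square roots\<close>

lemma sym_pos_def_eigenvalue_pos:
  assumes A: "sym_pos_def n A" and v: "v \<in> carrier_vec n" "v \<noteq> 0\<^sub>v n" "A *\<^sub>v v = e \<cdot>\<^sub>v v"
  shows "0 < e"
proof -
  have "0 < v \<bullet> (A *\<^sub>v v)"
    using A v unfolding sym_pos_def_def by blast
  also have "v \<bullet> (A *\<^sub>v v) = e * (v \<bullet> v)"
    using v by simp
  finally show ?thesis
    using conjugate_square_greater_0_vec[OF v(1)] v(2) by (simp add: zero_less_mult_iff)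
qed

lemma mat_diag_cong: "(\<And>i. i < n \<Longrightarrow> f i = g i) \<Longrightarrow> mat_diag n f = mat_diag n g"
  by (intro eq_matI) (auto simp: mat_diag_def)

lemma sym_pos_def_orthonormal_conj_diag:
  fixes U :: "real mat"
  assumes U: "orthonormal_mat n U" and d: "\<And>i. i < n \<Longrightarrow> 0 < d i"
  shows "sym_pos_def n (U * mat_diag n d * U\<^sup>T)"
proof -
  have Uc: "U \<in> carrier_mat n n" "U * U\<^sup>T = 1\<^sub>m n" using U by (auto simp: orthonormal_mat_def)
  have DT: "(mat_diag n d)\<^sup>T = mat_diag n d" by (auto simp: mat_diag_def)
  have "(U * mat_diag n d * U\<^sup>T)\<^sup>T = U * mat_diag n d * U\<^sup>T"
    using transpose_conj[OF Uc(1) mat_diag_dim] DT by simp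
  moreover have "0 < x \<bullet> ((U * mat_diag n d * U\<^sup>T) *\<^sub>v x)" if x: "x \<in> carrier_vec n" "x \<noteq> 0\<^sub>v n" for x
  proof -
    define y where "y = U\<^sup>T *\<^sub>v x"
    have y: "y \<in> carrier_vec n" using Uc x by (simp add: y_def)
    have "U *\<^sub>v y = x"
      using Uc x by (simp add: y_def assoc_mult_mat_vec[of _ n n _ n, symmetric])
    then have "y \<noteq> 0\<^sub>v n"
      using x Uc by (auto intro!: eq_vecI)
    then obtain k where k: "k < n" "y $ k \<noteq> 0"
      using y by (metis eq_vecI carrier_vecD index_zero_vec)
    have "x \<bullet> ((U * mat_diag n d * U\<^sup>T) *\<^sub>v x) = x \<bullet> (U *\<^sub>v (mat_diag n d *\<^sub>v y))"
      using Uc x by (simp add: y_def assoc_mult_mat_vec[of _ n n _ n])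
    also have "\<dots> = y \<bullet> (mat_diag n d *\<^sub>v y)"
      using transpose_vec_mult_scalar[OF Uc(1) mult_mat_vec_carrier[OF mat_diag_dim y] x(1)]
      by (simp add: y_def)
    also have "\<dots> = (\<Sum>i<n. d i * (y $ i)\<^sup>2)"
      using y by (auto simp: scalar_prod_def mat_diag_def lessThan_atLeast0 if_distrib[of "\<lambda>z. z * _"]
          power2_eq_square cong: if_cong intro!: sum.cong)
    also have "\<dots> > 0"
      using d k by (intro sum_pos2[of _ k]) (auto simp: less_imp_le)
    finally show ?thesis .
  qed
  moreover have "U * mat_diag n d * U\<^sup>T \<in> carrier_mat n n"
    using Uc(1) by (intro mult_carrier_mat[of _ n n]) auto
  ultimately show ?thesis
    by (simp add: sym_pos_def_def)
qed

lemma sym_pos_def_diagonalization: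
  assumes A: "sym_pos_def n A"
  obtains U d where "orthonormal_mat n U" "\<And>i. i < n \<Longrightarrow> 0 < d i" "A = U * mat_diag n d * U\<^sup>T"
proof -
  obtain U d where U: "orthonormal_mat n U" and A_eq: "A = U * mat_diag n d * U\<^sup>T"
    using real_symmetric_diagonalization[of A n] A by (auto simp: sym_pos_def_def)
  have "0 < d i" if "i < n" for i
    using orthonormal_conj_diag_eigenvector[OF U A_eq that] A U
    by (intro sym_pos_def_eigenvalue_pos[OF A, of "U *\<^sub>v unit_vec n i"]) (auto simp: orthonormal_mat_def)
  then show ?thesis
    using that U A_eq by blast
qed

lemma sym_pos_def_sqrt_exists:
  assumes "sym_pos_def n A"
  shows "\<exists>R. sym_pos_def n R \<and> R * R = A"
proof -
  obtain U d where U: "orthonormal_mat n U" and d: "\<And>i. i < n \<Longrightarrow> 0 < d i"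
    and A: "A = U * mat_diag n d * U\<^sup>T"
    using sym_pos_def_diagonalization[OF assms] by blast
  have "mat_diag n (\<lambda>i. sqrt (d i) * sqrt (d i)) = mat_diag n d"
    using d by (intro mat_diag_cong) (simp add: less_imp_le)
  then have "(U * mat_diag n (\<lambda>i. sqrt (d i)) * U\<^sup>T) * (U * mat_diag n (\<lambda>i. sqrt (d i)) * U\<^sup>T) = A"
    by (simp add: orthonormal_conj_mult[OF U] A)
  moreover have "sym_pos_def n (U * mat_diag n (\<lambda>i. sqrt (d i)) * U\<^sup>T)"
    using d by (intro sym_pos_def_orthonormal_conj_diag[OF U]) simp
  ultimately show ?thesis
    by blast
qed

lemma sym_pos_def_inverse_exists:
  assumes "sym_pos_def n A"
  shows "\<exists>B. B \<in> carrier_mat n n \<and> A * B = 1\<^sub>m n \<and> B * A = 1\<^sub>m n"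
proof -
  obtain U d where U: "orthonormal_mat n U" and d: "\<And>i. i < n \<Longrightarrow> 0 < d i"
    and A: "A = U * mat_diag n d * U\<^sup>T"
    using sym_pos_def_diagonalization[OF assms] by blast
  have Uc: "U \<in> carrier_mat n n" "U * U\<^sup>T = 1\<^sub>m n"
    using U by (auto simp: orthonormal_mat_def)
  have "mat_diag n (\<lambda>i. d i * (1 / d i)) = 1\<^sub>m n" "mat_diag n (\<lambda>i. (1 / d i) * d i) = 1\<^sub>m n"
    using d by (auto intro!: eq_matI simp: mat_diag_def less_imp_neq[symmetric])
  then have "A * (U * mat_diag n (\<lambda>i. 1 / d i) * U\<^sup>T) = 1\<^sub>m n"
    "(U * mat_diag n (\<lambda>i. 1 / d i) * U\<^sup>T) * A = 1\<^sub>m n"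
    using Uc by (simp_all add: orthonormal_conj_mult[OF U] A)
  moreover have "U * mat_diag n (\<lambda>i. 1 / d i) * U\<^sup>T \<in> carrier_mat n n"
    using Uc by (intro mult_carrier_mat[of _ n n]) auto
  ultimately show ?thesis
    by blast
qed

lemma symmetric_mult_self_scalar_prod:
  fixes S :: "'a::comm_ring mat"
  assumes "S \<in> carrier_mat n n" "S\<^sup>T = S" "v \<in> carrier_vec n"
  shows "(S *\<^sub>v v) \<bullet> (S *\<^sub>v v) = v \<bullet> ((S * S) *\<^sub>v v)"
  using transpose_vec_mult_scalar[of S n n "S *\<^sub>v v" v] assms
  by (simp add: assoc_mult_mat_vec[of _ n n _ n])

lemma sym_pos_def_sqrt_unique:
  fixes S1 S2 :: "real mat"
  assumes S1: "sym_pos_def n S1" and S2: "sym_pos_def n S2" and eq: "S1 * S1 = S2 * S2"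
  shows "S1 = S2"
proof -
  have S: "S1 \<in> carrier_mat n n" "S1\<^sup>T = S1" "S2 \<in> carrier_mat n n" "S2\<^sup>T = S2"
    using S1 S2 by (auto simp: sym_pos_def_def)
  have "S1 - S2 \<in> carrier_mat n n" "(S1 - S2)\<^sup>T = S1 - S2"
    using S by (auto simp: transpose_minus)
  then obtain U d where U: "orthonormal_mat n U" and D: "S1 - S2 = U * mat_diag n d * U\<^sup>T"
    using real_symmetric_diagonalization by blast
  have "d i = 0" if i: "i < n" for i
  proof -
    define v where "v = U *\<^sub>v unit_vec n i"
    have v: "v \<in> carrier_vec n" "v \<noteq> 0\<^sub>v n" and Dv: "S1 *\<^sub>v v - S2 *\<^sub>v v = d i \<cdot>\<^sub>v v"
      using orthonormal_conj_diag_eigenvector[OF U D i] U S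
      by (auto simp: v_def orthonormal_mat_def minus_mult_distrib_mat_vec[of _ n n, symmetric])
    have Sv: "S1 *\<^sub>v v \<in> carrier_vec n" "S2 *\<^sub>v v \<in> carrier_vec n"
      using S v by auto
    \<comment> \<open>test \<open>S1 (S1 - S2) + (S1 - S2) S2 = S1\<^sup>2 - S2\<^sup>2 = 0\<close> against the eigenvector \<open>v\<close> of \<open>S1 - S2\<close>\<close>
    have "d i * (v \<bullet> (S1 *\<^sub>v v) + v \<bullet> (S2 *\<^sub>v v)) = (S1 *\<^sub>v v - S2 *\<^sub>v v) \<bullet> (S1 *\<^sub>v v + S2 *\<^sub>v v)"
      using v Sv by (simp add: Dv scalar_prod_add_distrib[of v n])
    also have "\<dots> = (S1 *\<^sub>v v) \<bullet> (S1 *\<^sub>v v) - (S2 *\<^sub>v v) \<bullet> (S2 *\<^sub>v v)"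
      using Sv by (simp add: minus_scalar_prod_distrib[of _ n] scalar_prod_add_distrib[of _ n]
          comm_scalar_prod[of "S2 *\<^sub>v v" n "S1 *\<^sub>v v"])
    also have "\<dots> = 0"
      using S v by (simp add: symmetric_mult_self_scalar_prod eq)
    finally have "d i * (v \<bullet> (S1 *\<^sub>v v) + v \<bullet> (S2 *\<^sub>v v)) = 0" .
    moreover have "0 < v \<bullet> (S1 *\<^sub>v v)" "0 < v \<bullet> (S2 *\<^sub>v v)"
      using S1 S2 v unfolding sym_pos_def_def by blast+
    ultimately show ?thesis
      by simp
  qed
  then have "mat_diag n d = 0\<^sub>m n n"
    by (auto intro!: eq_matI simp: mat_diag_def)
  then have zero: "S1 - S2 = 0\<^sub>m n n"
    using U by (auto simp: D orthonormal_mat_def right_mult_zero_mat left_mult_zero_mat)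
  show ?thesis
  proof (rule eq_matI)
    fix i j assume "i < dim_row S2" "j < dim_col S2"
    then show "S1 $$ (i, j) = S2 $$ (i, j)"
      using arg_cong[OF zero, of "\<lambda>M. M $$ (i, j)"] S by simp
  qed (use S in auto)
qed

lemma spd_sqrt:
  assumes "sym_pos_def n A"
  shows "sym_pos_def n (spd_sqrt n A)" and "spd_sqrt n A * spd_sqrt n A = A"
proof -
  have "\<exists>!R. sym_pos_def n R \<and> R * R = A"
    using sym_pos_def_sqrt_exists[OF assms] sym_pos_def_sqrt_unique by blast
  from theI'[OF this] show "sym_pos_def n (spd_sqrt n A)" "spd_sqrt n A * spd_sqrt n A = A"
    unfolding spd_sqrt_def by blast+
qed

lemma mat_inv_eqI:
  fixes A B :: "real mat"
  assumes A: "A \<in> carrier_mat n n" and B: "B \<in> carrier_mat n n" "A * B = 1\<^sub>m n" "B * A = 1\<^sub>m n"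
  shows "mat_inv n A = B"
  unfolding mat_inv_def
proof (rule the_equality)
  fix B' assume "B' \<in> carrier_mat n n \<and> A * B' = 1\<^sub>m n \<and> B' * A = 1\<^sub>m n"
  then have B': "B' \<in> carrier_mat n n" "B' * A = 1\<^sub>m n"
    by auto
  then have "B' = B' * (A * B)"
    using B by simp
  also have "\<dots> = (B' * A) * B"
    by (rule assoc_mult_mat[symmetric]) (use A B B' in auto)
  finally show "B' = B"
    using B' B by simp
qed (use B in auto)

lemma spd_inv_sqrt:
  assumes "sym_pos_def n A"
  shows "spd_inv_sqrt n A \<in> carrier_mat n n"
    and "spd_sqrt n A * spd_inv_sqrt n A = 1\<^sub>m n" and "spd_inv_sqrt n A * spd_sqrt n A = 1\<^sub>m n"
proof -
  have R: "sym_pos_def n (spd_sqrt n A)"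
    using spd_sqrt(1)[OF assms] .
  then obtain B where B: "B \<in> carrier_mat n n" "spd_sqrt n A * B = 1\<^sub>m n" "B * spd_sqrt n A = 1\<^sub>m n"
    using sym_pos_def_inverse_exists by blast
  moreover have "spd_inv_sqrt n A = B"
    unfolding spd_inv_sqrt_def using R B by (intro mat_inv_eqI) (auto simp: sym_pos_def_def)
  ultimately show "spd_inv_sqrt n A \<in> carrier_mat n n"
    "spd_sqrt n A * spd_inv_sqrt n A = 1\<^sub>m n" "spd_inv_sqrt n A * spd_sqrt n A = 1\<^sub>m n"
    by simp_all
qed

section \<open>Eigenvalues of a congruence by a persymmetric matrix\<close>

lemma involution_conj_eq_imp_commute:
  fixes Y M :: "'a::comm_ring_1 mat"
  assumes Y: "Y \<in> carrier_mat n n" "Y * Y = 1\<^sub>m n" and M: "M \<in> carrier_mat n n" "Y * M * Y = M"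
  shows "M * Y = Y * M"
proof -
  have "M * Y = (Y * M * Y) * Y"
    using M(2) by simp
  also have "\<dots> = Y * M * (Y * Y)"
    by (rule assoc_mult_mat) (use Y M in auto)
  finally show ?thesis
    using Y M by simp
qed

lemma quadratic_form_conj_invariant:
  fixes Y M :: "real mat"
  assumes "Y \<in> carrier_mat n n" "Y\<^sup>T = Y" "Y * M * Y = M" "M \<in> carrier_mat n n" "w \<in> carrier_vec n"
  shows "(Y *\<^sub>v w) \<bullet> (M *\<^sub>v (Y *\<^sub>v w)) = w \<bullet> (M *\<^sub>v w)"
proof -
  have "Y *\<^sub>v (M *\<^sub>v (Y *\<^sub>v w)) = (Y * M * Y) *\<^sub>v w"
    using assms(1,4,5) by (simp add: assoc_mult_mat_vec[of _ n n _ n])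
  then have "Y *\<^sub>v (M *\<^sub>v (Y *\<^sub>v w)) = M *\<^sub>v w"
    using assms(3) by simp
  then show ?thesis
    using transpose_vec_mult_scalar[of Y n n "M *\<^sub>v (Y *\<^sub>v w)" w] assms by simp
qed

lemma persymmetric_pencil_eigenvalue_sq:
  fixes AR A Y G :: "real mat"
  assumes AR: "AR \<in> carrier_mat n n" "AR\<^sup>T = AR"
    and G: "G \<in> carrier_mat n n" "G * AR = 1\<^sub>m n" "AR * G = 1\<^sub>m n"
    and Y: "Y \<in> carrier_mat n n" "Y\<^sup>T = Y" "Y * Y = 1\<^sub>m n" "Y * AR * Y = AR"
    and A: "A \<in> carrier_mat n n"
    and skew: "\<And>v. v \<in> carrier_vec n \<Longrightarrow> v \<bullet> (A *\<^sub>v v) = v \<bullet> (AR *\<^sub>v v)"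
    and y: "y \<in> carrier_vec n" and eig: "Y *\<^sub>v (A *\<^sub>v y) = lam \<cdot>\<^sub>v (AR *\<^sub>v y)"
  defines "z \<equiv> G *\<^sub>v (A *\<^sub>v y - AR *\<^sub>v y)"
  shows "AR *\<^sub>v z = A *\<^sub>v y - AR *\<^sub>v y"
    and "lam\<^sup>2 * (y \<bullet> (AR *\<^sub>v y)) = y \<bullet> (AR *\<^sub>v y) + z \<bullet> (AR *\<^sub>v z)"
proof -
  have G_left: "G *\<^sub>v (AR *\<^sub>v v) = v" and AR_left: "AR *\<^sub>v (G *\<^sub>v v) = v"
    if "v \<in> carrier_vec n" for v
    using that AR G by (simp_all add: assoc_mult_mat_vec[of _ n n _ n, symmetric])
  have Ky: "A *\<^sub>v y - AR *\<^sub>v y \<in> carrier_vec n"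
    using A AR y by auto
  show ARz: "AR *\<^sub>v z = A *\<^sub>v y - AR *\<^sub>v y"
    unfolding z_def using AR_left[OF Ky] .
  have z: "z \<in> carrier_vec n"
    using G Ky by (simp add: z_def)
  define w where "w = y + z"
  have w: "w \<in> carrier_vec n" and ARw: "AR *\<^sub>v w = A *\<^sub>v y"
    using y z AR A ARz by (auto simp: w_def mult_add_distrib_mat_vec[of _ n n])
  have YAR: "AR * Y = Y * AR"
    using Y AR by (intro involution_conj_eq_imp_commute) auto
  have "AR *\<^sub>v (Y *\<^sub>v w) = (AR * Y) *\<^sub>v w"
    by (rule assoc_mult_mat_vec[symmetric]) (use AR Y w in auto)
  also have "\<dots> = Y *\<^sub>v (AR *\<^sub>v w)"
    unfolding YAR by (rule assoc_mult_mat_vec) (use AR Y w in auto)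
  also have "\<dots> = AR *\<^sub>v (lam \<cdot>\<^sub>v y)"
    using ARw eig AR y by (simp add: mult_mat_vec)
  finally have "G *\<^sub>v (AR *\<^sub>v (Y *\<^sub>v w)) = G *\<^sub>v (AR *\<^sub>v (lam \<cdot>\<^sub>v y))"
    by simp
  then have Yw: "Y *\<^sub>v w = lam \<cdot>\<^sub>v y"
    using G_left Y w y by (metis mult_mat_vec_carrier smult_carrier_vec)
  have cross: "y \<bullet> (AR *\<^sub>v z) = 0" "z \<bullet> (AR *\<^sub>v y) = 0"
  proof -
    show "y \<bullet> (AR *\<^sub>v z) = 0"
      using skew[OF y] A AR y by (simp add: ARz scalar_prod_minus_distrib[of y n])
    then show "z \<bullet> (AR *\<^sub>v y) = 0"
      using transpose_vec_mult_scalar[of AR n n y z] AR y z by (simp add: comm_scalar_prod[of y n])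
  qed
  have "lam\<^sup>2 * (y \<bullet> (AR *\<^sub>v y)) = (Y *\<^sub>v w) \<bullet> (AR *\<^sub>v (Y *\<^sub>v w))"
    using AR y by (simp add: Yw mult_mat_vec power2_eq_square)
  also have "\<dots> = w \<bullet> (AR *\<^sub>v w)"
    using Y(1,2,4) AR(1) w by (rule quadratic_form_conj_invariant)
  also have "\<dots> = (y + z) \<bullet> (AR *\<^sub>v y + AR *\<^sub>v z)"
    using AR(1) y z by (simp add: w_def mult_add_distrib_mat_vec[of _ n n])
  also have "\<dots> = y \<bullet> (AR *\<^sub>v y) + z \<bullet> (AR *\<^sub>v z)"
    using AR(1) y z cross
    by (simp add: add_scalar_prod_distrib[of _ n] scalar_prod_add_distrib[of _ n])
  finally show "lam\<^sup>2 * (y \<bullet> (AR *\<^sub>v y)) = y \<bullet> (AR *\<^sub>v y) + z \<bullet> (AR *\<^sub>v z)" .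
qed

lemma spd_inv_sqrt_congruence_eigenvector:
  fixes AR M :: "real mat"
  assumes AR: "sym_pos_def n AR" and M: "M \<in> carrier_mat n n"
    and ev: "eigenvalue (spd_inv_sqrt n AR * M * spd_inv_sqrt n AR) lam"
  obtains y where "y \<in> carrier_vec n" "y \<noteq> 0\<^sub>v n" "M *\<^sub>v y = lam \<cdot>\<^sub>v (AR *\<^sub>v y)"
proof -
  define R where "R = spd_sqrt n AR"
  define B where "B = spd_inv_sqrt n AR"
  have R: "R \<in> carrier_mat n n" "R * R = AR" and B: "B \<in> carrier_mat n n" "R * B = 1\<^sub>m n"
    using spd_sqrt[OF AR] spd_inv_sqrt[OF AR] by (auto simp: R_def B_def sym_pos_def_def)
  obtain x where x: "x \<in> carrier_vec n" "x \<noteq> 0\<^sub>v n" "(B * M * B) *\<^sub>v x = lam \<cdot>\<^sub>v x"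
    using ev B M unfolding eigenvalue_def eigenvector_def B_def by auto
  define y where "y = B *\<^sub>v x"
  have RB: "R *\<^sub>v (B *\<^sub>v v) = v" if "v \<in> carrier_vec n" for v
    using R B that by (simp add: assoc_mult_mat_vec[of _ n n _ n, symmetric])
  have y: "y \<in> carrier_vec n" and Ry: "R *\<^sub>v y = x"
    using B x RB by (auto simp: y_def)
  have "y \<noteq> 0\<^sub>v n"
    using Ry x R by (auto intro!: eq_vecI)
  moreover have "M *\<^sub>v y = lam \<cdot>\<^sub>v (AR *\<^sub>v y)"
  proof -
    have "M *\<^sub>v y = R *\<^sub>v ((B * M * B) *\<^sub>v x)"
      using RB[of "M *\<^sub>v y"] B M x by (simp add: y_def assoc_mult_mat_vec[of _ n n _ n])
    also have "\<dots> = lam \<cdot>\<^sub>v (R *\<^sub>v (R *\<^sub>v y))"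
      using R x by (simp add: x(3) Ry mult_mat_vec)
    finally show ?thesis
      using R y by (simp add: assoc_mult_mat_vec[of _ n n _ n, symmetric])
  qed
  ultimately show ?thesis
    using that y by blast
qed

lemma spd_persymmetric_eigenvalue_bounds:
  fixes AR A Y :: "real mat"
  assumes AR: "sym_pos_def n AR"
    and Y: "Y \<in> carrier_mat n n" "Y\<^sup>T = Y" "Y * Y = 1\<^sub>m n" "Y * AR * Y = AR"
    and A: "A \<in> carrier_mat n n"
    and skew: "\<And>v. v \<in> carrier_vec n \<Longrightarrow> v \<bullet> (A *\<^sub>v v) = v \<bullet> (AR *\<^sub>v v)"
    and ev: "eigenvalue (spd_inv_sqrt n AR * (Y * A) * spd_inv_sqrt n AR) lam"
  shows "1 \<le> \<bar>lam\<bar>"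
    and "(\<And>z y. z \<in> carrier_vec n \<Longrightarrow> y \<in> carrier_vec n \<Longrightarrow>
            2 * (z \<bullet> (A *\<^sub>v y) - z \<bullet> (AR *\<^sub>v y)) \<le> z \<bullet> (AR *\<^sub>v z) + s\<^sup>2 * (y \<bullet> (AR *\<^sub>v y)))
          \<Longrightarrow> \<bar>lam\<bar> \<le> sqrt (1 + s\<^sup>2)"
proof -
  have ARc: "AR \<in> carrier_mat n n" "AR\<^sup>T = AR"
    using AR by (auto simp: sym_pos_def_def)
  obtain y where y: "y \<in> carrier_vec n" "y \<noteq> 0\<^sub>v n" and eig: "(Y * A) *\<^sub>v y = lam \<cdot>\<^sub>v (AR *\<^sub>v y)"
    using spd_inv_sqrt_congruence_eigenvector[OF AR _ ev] Y A by auto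
  obtain G where G: "G \<in> carrier_mat n n" "AR * G = 1\<^sub>m n" "G * AR = 1\<^sub>m n"
    using sym_pos_def_inverse_exists[OF AR] by blast
  define z where "z = G *\<^sub>v (A *\<^sub>v y - AR *\<^sub>v y)"
  have "Y *\<^sub>v (A *\<^sub>v y) = lam \<cdot>\<^sub>v (AR *\<^sub>v y)"
    using eig assoc_mult_mat_vec[of Y n n A n y] Y A y by simp
  note pencil = persymmetric_pencil_eigenvalue_sq[OF ARc G(1,3,2) Y A skew y(1) this, folded z_def]
  define q where "q = y \<bullet> (AR *\<^sub>v y)"
  define r where "r = z \<bullet> (AR *\<^sub>v z)"
  have z: "z \<in> carrier_vec n"
    using G A ARc y by (simp add: z_def)
  have q: "0 < q"
    using AR y unfolding q_def sym_pos_def_def by blast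
  have r: "0 \<le> r"
    using AR z unfolding r_def sym_pos_def_def by (cases "z = 0\<^sub>v n") (auto intro: less_imp_le)
  have main: "lam\<^sup>2 * q = q + r"
    using pencil(2) by (simp add: q_def r_def)
  then have "1 * q \<le> lam\<^sup>2 * q"
    using r by simp
  then show "1 \<le> \<bar>lam\<bar>"
    using q abs_le_square_iff[of 1 lam] by (simp add: mult_le_cancel_right)
  assume bound: "\<And>z y. z \<in> carrier_vec n \<Longrightarrow> y \<in> carrier_vec n \<Longrightarrow>
    2 * (z \<bullet> (A *\<^sub>v y) - z \<bullet> (AR *\<^sub>v y)) \<le> z \<bullet> (AR *\<^sub>v z) + s\<^sup>2 * (y \<bullet> (AR *\<^sub>v y))"
  have "z \<bullet> (A *\<^sub>v y) - z \<bullet> (AR *\<^sub>v y) = r"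
    using z y A ARc by (simp add: r_def pencil(1) scalar_prod_minus_distrib[of z n])
  then have "r \<le> s\<^sup>2 * q"
    using bound[OF z y(1)] by (simp add: q_def r_def)
  then have "lam\<^sup>2 * q \<le> (1 + s\<^sup>2) * q"
    using main by (simp add: algebra_simps)
  then have "lam\<^sup>2 \<le> 1 + s\<^sup>2"
    using q by (rule mult_right_le_imp_le)
  then show "\<bar>lam\<bar> \<le> sqrt (1 + s\<^sup>2)"
    using real_sqrt_le_mono by fastforce
qed

section \<open>Toeplitz matrices of an integrable symbol\<close>

abbreviation circle_measure :: "real measure" where
  "circle_measure \<equiv> restrict_space lborel {-pi..pi}"

lemma set_integrable_iff_circle:
  fixes g :: "real \<Rightarrow> complex"
  shows "set_integrable lborel {-pi..pi} g \<longleftrightarrow> integrable circle_measure g"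
  by (rule set_integrable_eq) simp

lemma AE_circle_iff: "(AE t in circle_measure. P t) \<longleftrightarrow> (AE t in lborel. t \<in> {-pi..pi} \<longrightarrow> P t)"
  by (simp add: AE_restrict_space_iff)

lemma emeasure_circle: "emeasure circle_measure (space circle_measure) = ennreal (2 * pi)"
  by (simp add: emeasure_restrict_space space_restrict_space)

lemma integrable_circle_mult_cis:
  assumes "integrable circle_measure g"
  shows "integrable circle_measure (\<lambda>t. g t * cis (c * t))"
proof (rule Bochner_Integration.integrable_bound[OF assms])
  have [measurable]: "g \<in> borel_measurable circle_measure"
    using assms by (rule borel_measurable_integrable)
  have [measurable]: "(\<lambda>t. t) \<in> borel_measurable circle_measure"
    by (rule measurable_restrict_space1) simp
  show "(\<lambda>t. g t * cis (c * t)) \<in> borel_measurable circle_measure"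
    unfolding cis_conv_exp by measurable
qed (simp add: norm_mult)

lemma Re_fourier_coeff:
  assumes "integrable circle_measure g"
  shows "Re (fourier_coeff g k) = (LINT t|circle_measure. Re (g t * cis (- real_of_int k * t))) / (2 * pi)"
proof -
  have fc: "fourier_coeff g k = (CLINT t|circle_measure. g t * cis (- real_of_int k * t)) / complex_of_real (2 * pi)"
    unfolding fourier_coeff_def set_lebesgue_integral_def
    by (simp add: integral_restrict_space cis_conv_exp mult.assoc)
  show ?thesis
    by (simp only: fc Re_divide_of_real integral_Re[OF integrable_circle_mult_cis[OF assms, of "- real_of_int k"]])
qed

definition trig_poly :: "nat \<Rightarrow> real vec \<Rightarrow> real \<Rightarrow> complex" where
  "trig_poly n a t = (\<Sum>j<n. complex_of_real (a $ j) * cis (real j * t))"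

lemma cnj_trig_poly_mult:
  "cnj (trig_poly n a t) * trig_poly n b t
     = (\<Sum>i<n. \<Sum>j<n. complex_of_real (a $ i * b $ j) * cis ((real j - real i) * t))"
proof -
  have "cnj (trig_poly n a t) = (\<Sum>i<n. complex_of_real (a $ i) * cis (- (real i * t)))"
    by (simp add: trig_poly_def cis_cnj)
  then have "cnj (trig_poly n a t) * trig_poly n b t
      = (\<Sum>i<n. \<Sum>j<n. (complex_of_real (a $ i) * cis (- (real i * t))) * (complex_of_real (b $ j) * cis (real j * t)))"
    unfolding trig_poly_def[of n b] by (simp only: sum_product)
  then show ?thesis
    by (simp add: cis_mult algebra_simps)
qed

lemma toeplitz_bilinear_form:
  assumes g: "integrable circle_measure g" and a: "a \<in> carrier_vec n" and b: "b \<in> carrier_vec n"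
  shows "integrable circle_measure (\<lambda>t. Re (g t * (cnj (trig_poly n a t) * trig_poly n b t)))"
    and "a \<bullet> (map_mat Re (toeplitz n g) *\<^sub>v b)
           = (LINT t|circle_measure. Re (g t * (cnj (trig_poly n a t) * trig_poly n b t))) / (2 * pi)"
proof -
  define F where "F i j t = a $ i * b $ j * Re (g t * cis ((real j - real i) * t))" for i j t
  have F: "integrable circle_measure (F i j)" for i j
    unfolding F_def using integrable_Re[OF integrable_circle_mult_cis[OF g]] by simp
  have integrand: "Re (g t * (cnj (trig_poly n a t) * trig_poly n b t)) = (\<Sum>i<n. \<Sum>j<n. F i j t)" for t
    unfolding cnj_trig_poly_mult F_def by (simp add: sum_distrib_left Re_sum algebra_simps)
  show "integrable circle_measure (\<lambda>t. Re (g t * (cnj (trig_poly n a t) * trig_poly n b t)))"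
    unfolding integrand using F by simp
  have "a \<bullet> (map_mat Re (toeplitz n g) *\<^sub>v b)
      = (\<Sum>i<n. \<Sum>j<n. a $ i * b $ j * Re (fourier_coeff g (int i - int j)))"
    using a b by (simp add: toeplitz_def scalar_prod_def lessThan_atLeast0 sum_distrib_left algebra_simps)
  also have "\<dots> = (\<Sum>i<n. \<Sum>j<n. integral\<^sup>L circle_measure (F i j)) / (2 * pi)"
  proof -
    have "- real_of_int (int i - int j) * t = (real j - real i) * t" for i j t
      by simp
    then have "a $ i * b $ j * Re (fourier_coeff g (int i - int j)) = integral\<^sup>L circle_measure (F i j) / (2 * pi)"
      for i j
      unfolding Re_fourier_coeff[OF g] F_def by (simp only: integral_mult_right_zero) simp
    then show ?thesis
      by (simp add: sum_divide_distrib)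
  qed
  also have "\<dots> = (LINT t|circle_measure. Re (g t * (cnj (trig_poly n a t) * trig_poly n b t))) / (2 * pi)"
    unfolding integrand using F by simp
  finally show "a \<bullet> (map_mat Re (toeplitz n g) *\<^sub>v b)
      = (LINT t|circle_measure. Re (g t * (cnj (trig_poly n a t) * trig_poly n b t))) / (2 * pi)" .
qed

lemma fourier_coeff_of_real_uminus:
  "fourier_coeff (\<lambda>t. complex_of_real (h t)) (- k) = cnj (fourier_coeff (\<lambda>t. complex_of_real (h t)) k)"
  unfolding fourier_coeff_def set_lebesgue_integral_def
  by (simp add: exp_cnj Bochner_Integration.integral_cnj[symmetric])

lemma toeplitz_of_real_symmetric:
  "(map_mat Re (toeplitz n (\<lambda>t. complex_of_real (h t))))\<^sup>T = map_mat Re (toeplitz n (\<lambda>t. complex_of_real (h t)))"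
proof (rule eq_matI)
  fix i j assume "i < dim_row (map_mat Re (toeplitz n (\<lambda>t. complex_of_real (h t))))"
    "j < dim_col (map_mat Re (toeplitz n (\<lambda>t. complex_of_real (h t))))"
  then show "(map_mat Re (toeplitz n (\<lambda>t. complex_of_real (h t))))\<^sup>T $$ (i, j)
      = map_mat Re (toeplitz n (\<lambda>t. complex_of_real (h t))) $$ (i, j)"
    using fourier_coeff_of_real_uminus[of h "int i - int j"] by (simp add: toeplitz_def)
qed (simp_all add: toeplitz_def)

lemma exchange_mat_carrier: "exchange_mat n \<in> carrier_mat n n"
  by (simp add: exchange_mat_def)

lemma transpose_exchange_mat: "(exchange_mat n)\<^sup>T = exchange_mat n"
  by (rule eq_matI) (auto simp: exchange_mat_def)

lemma exchange_mat_mult_index: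
  fixes M :: "real mat"
  assumes "M \<in> carrier_mat n m" "i < n" "j < m"
  shows "(exchange_mat n * M) $$ (i, j) = M $$ (n - 1 - i, j)"
proof -
  have "(exchange_mat n * M) $$ (i, j) = (\<Sum>k<n. exchange_mat n $$ (i, k) * M $$ (k, j))"
    using assms by (simp add: exchange_mat_def scalar_prod_def lessThan_atLeast0)
  also have "\<dots> = (\<Sum>k<n. if k = n - 1 - i then M $$ (k, j) else 0)"
    using assms by (intro sum.cong) (auto simp: exchange_mat_def)
  finally show ?thesis
    using assms by simp
qed

lemma mult_exchange_mat_index:
  fixes M :: "real mat"
  assumes "M \<in> carrier_mat m n" "i < m" "j < n"
  shows "(M * exchange_mat n) $$ (i, j) = M $$ (i, n - 1 - j)"
proof -
  have "(M * exchange_mat n) $$ (i, j) = (\<Sum>k<n. M $$ (i, k) * exchange_mat n $$ (k, j))"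
    using assms by (simp add: exchange_mat_def scalar_prod_def lessThan_atLeast0)
  also have "\<dots> = (\<Sum>k<n. if k = n - 1 - j then M $$ (i, k) else 0)"
    using assms by (intro sum.cong) (auto simp: exchange_mat_def)
  finally show ?thesis
    using assms by simp
qed

lemma exchange_mat_square: "exchange_mat n * exchange_mat n = 1\<^sub>m n"
proof (rule eq_matI)
  fix i j assume "i < dim_row (1\<^sub>m n)" "j < dim_col (1\<^sub>m n)"
  then show "(exchange_mat n * exchange_mat n) $$ (i, j) = 1\<^sub>m n $$ (i, j)"
    using exchange_mat_mult_index[OF exchange_mat_carrier, of i n j] by (auto simp: exchange_mat_def)
qed (simp_all add: exchange_mat_def)

lemma toeplitz_carrier: "map_mat Re (toeplitz n g) \<in> carrier_mat n n"
  by (simp add: toeplitz_def)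

lemma exchange_mat_conj_toeplitz:
  "exchange_mat n * map_mat Re (toeplitz n g) * exchange_mat n = (map_mat Re (toeplitz n g))\<^sup>T"
proof (rule eq_matI)
  fix i j assume "i < dim_row ((map_mat Re (toeplitz n g))\<^sup>T)" "j < dim_col ((map_mat Re (toeplitz n g))\<^sup>T)"
  then have ij: "i < n" "j < n"
    by (simp_all add: toeplitz_def)
  have "int (n - 1 - i) - int (n - 1 - j) = int j - int i"
    using ij by simp
  moreover have "(exchange_mat n * map_mat Re (toeplitz n g) * exchange_mat n) $$ (i, j)
      = map_mat Re (toeplitz n g) $$ (n - 1 - i, n - 1 - j)"
    using mult_exchange_mat_index[OF mult_carrier_mat[OF exchange_mat_carrier toeplitz_carrier] ij]
      exchange_mat_mult_index[OF toeplitz_carrier, of i n "n - 1 - j"] ij by simp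
  ultimately show "(exchange_mat n * map_mat Re (toeplitz n g) * exchange_mat n) $$ (i, j)
      = (map_mat Re (toeplitz n g))\<^sup>T $$ (i, j)"
    using ij by (simp add: toeplitz_def)
qed (simp_all add: exchange_mat_def toeplitz_def)

lemma countable_cis_eq: "countable {t. cis t = z}"
proof (cases "\<exists>t0. cis t0 = z")
  case False
  then show ?thesis by simp
next
  case True
  then obtain t0 where t0: "cis t0 = z" by blast
  have "{t. cis t = z} \<subseteq> range (\<lambda>m::int. t0 + real_of_int m * 2 * pi)"
  proof
    fix t assume "t \<in> {t. cis t = z}"
    then have "cis (t - t0) = 1"
      using t0 cis_neq_zero[of t0] by (simp add: cis_divide[symmetric])
    then have "cos (t - t0) = 1"
      using cis.sel(1)[of "t - t0"] by simp
    then obtain m :: int where "t - t0 = real_of_int m * 2 * pi"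
      using cos_one_2pi_int by blast
    then show "t \<in> range (\<lambda>m::int. t0 + real_of_int m * 2 * pi)"
      by (intro image_eqI[of _ _ m]) auto
  qed
  then show ?thesis
    by (rule countable_subset) simp
qed

lemma countable_trig_poly_zeros:
  assumes a: "a \<in> carrier_vec n" "a \<noteq> 0\<^sub>v n"
  shows "countable {t. trig_poly n a t = 0}"
proof -
  define p where "p = (\<Sum>j<n. monom (complex_of_real (a $ j)) j)"
  obtain k where k: "k < n" "a $ k \<noteq> 0"
    using a by (metis eq_vecI carrier_vecD index_zero_vec)
  have "coeff p k = complex_of_real (a $ k)"
    unfolding p_def coeff_sum by (simp add: coeff_monom k(1))
  then have "p \<noteq> 0"
    using k by auto
  have "trig_poly n a t = poly p (cis t)" for t
    by (simp add: p_def trig_poly_def poly_sum poly_monom Complex.DeMoivre)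
  then have "{t. trig_poly n a t = 0} \<subseteq> (\<Union>z\<in>{z. poly p z = 0}. {t. cis t = z})"
    by auto
  moreover have "countable (\<Union>z\<in>{z. poly p z = 0}. {t. cis t = z})"
    using poly_roots_finite[OF \<open>p \<noteq> 0\<close>] countable_cis_eq by (intro countable_UN) (auto intro: countable_finite)
  ultimately show ?thesis
    by (rule countable_subset)
qed

lemma integral_pos_AE:
  fixes f :: "'a \<Rightarrow> real"
  assumes f: "integrable M f" and pos: "AE x in M. 0 < f x" and M: "emeasure M (space M) \<noteq> 0"
  shows "0 < integral\<^sup>L M f"
proof -
  have nonneg: "AE x in M. 0 \<le> f x"
    using pos by eventually_elim simp
  have "integral\<^sup>L M f \<noteq> 0"
  proof
    assume "integral\<^sup>L M f = 0"
    then have "AE x in M. f x = 0"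
      using integral_nonneg_eq_0_iff_AE[OF f nonneg] by simp
    with pos have "AE x in M. False"
      by eventually_elim simp
    then show False
      using M ae_filter_eq_bot_iff[of M] by (simp add: eventually_False)
  qed
  then show ?thesis
    using integral_nonneg_AE[OF nonneg] by simp
qed

lemma Re_of_real_mult_cnj_self: "Re (complex_of_real x * (cnj p * p)) = x * (cmod p)\<^sup>2"
  using cmod_power2[of p] by (simp add: power2_eq_square)

lemma toeplitz_of_real_sym_pos_def:
  assumes h: "integrable circle_measure h" and pos: "AE t in circle_measure. 0 < h t"
  shows "sym_pos_def n (map_mat Re (toeplitz n (\<lambda>t. complex_of_real (h t))))"
proof -
  have "0 < v \<bullet> (map_mat Re (toeplitz n (\<lambda>t. complex_of_real (h t))) *\<^sub>v v)"
    if v: "v \<in> carrier_vec n" "v \<noteq> 0\<^sub>v n" for v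
  proof -
    note T = toeplitz_bilinear_form[OF integrable_of_real[OF h] v(1) v(1), unfolded Re_of_real_mult_cnj_self]
    have "AE t in lborel. t \<notin> {t. trig_poly n v t = 0}"
      by (rule AE_not_in[OF countable_imp_null_set_lborel[OF countable_trig_poly_zeros[OF v]]])
    then have "AE t in circle_measure. trig_poly n v t \<noteq> 0"
      unfolding AE_circle_iff by eventually_elim simp
    with pos have "AE t in circle_measure. 0 < h t * (cmod (trig_poly n v t))\<^sup>2"
      by eventually_elim simp
    then have "0 < (LINT t|circle_measure. h t * (cmod (trig_poly n v t))\<^sup>2)"
      using integral_pos_AE[OF T(1)] emeasure_circle by simp
    then show ?thesis
      unfolding T(2) by simp
  qed
  then show ?thesis
    unfolding sym_pos_def_def using toeplitz_of_real_symmetric toeplitz_carrier by blast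
qed

lemma toeplitz_quadratic_form_Re:
  assumes g: "integrable circle_measure g" and v: "v \<in> carrier_vec n"
  shows "v \<bullet> (map_mat Re (toeplitz n g) *\<^sub>v v)
           = v \<bullet> (map_mat Re (toeplitz n (\<lambda>t. complex_of_real (Re (g t)))) *\<^sub>v v)"
proof -
  have "Re (g t * (cnj (trig_poly n v t) * trig_poly n v t))
      = Re (complex_of_real (Re (g t)) * (cnj (trig_poly n v t) * trig_poly n v t))" for t
    by simp
  then show ?thesis
    using toeplitz_bilinear_form(2)[OF g v v] toeplitz_bilinear_form(2)[OF integrable_of_real[OF integrable_Re[OF g]] v v]
    by simp
qed

lemma Re_mult_cnj_mult_le:
  fixes c u v :: complex and s :: real
  assumes c: "0 \<le> Re c" "\<bar>Im c\<bar> \<le> s * Re c" and s: "0 \<le> s"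
  shows "2 * (Re (c * (cnj u * v)) - Re c * Re (cnj u * v)) \<le> Re c * ((cmod u)\<^sup>2 + s\<^sup>2 * (cmod v)\<^sup>2)"
proof -
  have "2 * (Re (c * (cnj u * v)) - Re c * Re (cnj u * v)) = - 2 * (Im c * Im (cnj u * v))"
    by simp
  also have "\<dots> \<le> 2 * (\<bar>Im c\<bar> * cmod (cnj u * v))"
  proof -
    have "- (Im c * Im (cnj u * v)) \<le> \<bar>Im c\<bar> * \<bar>Im (cnj u * v)\<bar>"
      by (metis abs_ge_minus_self abs_mult)
    also have "\<dots> \<le> \<bar>Im c\<bar> * cmod (cnj u * v)"
      by (rule mult_left_mono[OF abs_Im_le_cmod abs_ge_zero])
    finally show ?thesis
      by simp
  qed
  also have "\<dots> \<le> 2 * (s * Re c * (cmod u * cmod v))"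
    using c by (simp add: norm_mult mult_right_mono)
  also have "\<dots> \<le> Re c * ((cmod u)\<^sup>2 + s\<^sup>2 * (cmod v)\<^sup>2)"
  proof -
    have "2 * s * (cmod u * cmod v) \<le> (cmod u)\<^sup>2 + s\<^sup>2 * (cmod v)\<^sup>2"
      using sum_squares_ge_zero[of "cmod u - s * cmod v" 0] by (simp add: power2_eq_square algebra_simps)
    from mult_left_mono[OF this c(1)] show ?thesis
      by (simp add: algebra_simps)
  qed
  finally show ?thesis .
qed

lemma toeplitz_skew_part_bound:
  assumes g: "integrable circle_measure g" and s: "0 \<le> s"
    and bound: "AE t in circle_measure. 0 \<le> Re (g t) \<and> \<bar>Im (g t)\<bar> \<le> s * Re (g t)"
    and z: "z \<in> carrier_vec n" and y: "y \<in> carrier_vec n"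
  defines "T \<equiv> map_mat Re (toeplitz n g)"
    and "T_R \<equiv> map_mat Re (toeplitz n (\<lambda>t. complex_of_real (Re (g t))))"
  shows "2 * (z \<bullet> (T *\<^sub>v y) - z \<bullet> (T_R *\<^sub>v y)) \<le> z \<bullet> (T_R *\<^sub>v z) + s\<^sup>2 * (y \<bullet> (T_R *\<^sub>v y))"
proof -
  have gR: "integrable circle_measure (\<lambda>t. complex_of_real (Re (g t)))"
    using g by (intro integrable_of_real integrable_Re)
  define w where "w t = cnj (trig_poly n z t) * trig_poly n y t" for t
  define F where "F t = 2 * (Re (g t * w t) - Re (complex_of_real (Re (g t)) * w t))" for t
  define G where "G t = Re (g t) * (cmod (trig_poly n z t))\<^sup>2 + s\<^sup>2 * (Re (g t) * (cmod (trig_poly n y t))\<^sup>2)"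
    for t
  note Tzy = toeplitz_bilinear_form[OF g z y, folded w_def T_def]
  note TRzy = toeplitz_bilinear_form[OF gR z y, folded w_def T_R_def]
  note TRzz = toeplitz_bilinear_form[OF gR z z, folded T_R_def, unfolded Re_of_real_mult_cnj_self]
  note TRyy = toeplitz_bilinear_form[OF gR y y, folded T_R_def, unfolded Re_of_real_mult_cnj_self]
  have "integral\<^sup>L circle_measure F = 2 * ((LINT t|circle_measure. Re (g t * w t))
      - (LINT t|circle_measure. Re (complex_of_real (Re (g t)) * w t)))"
    unfolding F_def integral_mult_right_zero Bochner_Integration.integral_diff[OF Tzy(1) TRzy(1)] ..
  then have "2 * (z \<bullet> (T *\<^sub>v y) - z \<bullet> (T_R *\<^sub>v y)) = integral\<^sup>L circle_measure F / (2 * pi)"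
    using Tzy(2) TRzy(2) by (simp add: diff_divide_distrib)
  also have "\<dots> \<le> integral\<^sup>L circle_measure G / (2 * pi)"
  proof (intro divide_right_mono integral_mono_AE)
    show "integrable circle_measure F"
      unfolding F_def[abs_def] using Tzy(1) TRzy(1) by (intro integrable_mult_right Bochner_Integration.integrable_diff)
    show "integrable circle_measure G"
      unfolding G_def[abs_def] using TRzz(1) TRyy(1) by (intro Bochner_Integration.integrable_add integrable_mult_right)
    show "AE t in circle_measure. F t \<le> G t"
      using bound
    proof eventually_elim
      case (elim t)
      then show ?case
        using Re_mult_cnj_mult_le[of "g t" s "trig_poly n z t" "trig_poly n y t"] s
        by (simp add: F_def G_def w_def algebra_simps)
    qed
  qed simp
  also have "\<dots> = z \<bullet> (T_R *\<^sub>v z) + s\<^sup>2 * (y \<bullet> (T_R *\<^sub>v y))"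
    using TRzz TRyy by (simp add: G_def[abs_def] add_divide_distrib)
  finally show ?thesis .
qed

lemma toeplitz_congruence_eigenvalue_bounds:
  fixes f :: "real \<Rightarrow> complex" and n :: nat
  assumes f: "integrable circle_measure f" and pos: "AE t in circle_measure. 0 < Re (f t)"
  defines "A \<equiv> map_mat Re (toeplitz n f)"
    and "A_R \<equiv> map_mat Re (toeplitz n (\<lambda>t. complex_of_real (Re (f t))))"
  defines "H \<equiv> spd_inv_sqrt n A_R * (exchange_mat n * A) * spd_inv_sqrt n A_R"
  shows "finite {lam. eigenvalue H lam}"
    and "eigenvalue H lam \<Longrightarrow> 1 \<le> \<bar>lam\<bar>"
    and "eigenvalue H lam \<Longrightarrow> 0 \<le> s \<Longrightarrow> AE t in circle_measure. \<bar>Im (f t)\<bar> \<le> s * Re (f t)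
          \<Longrightarrow> \<bar>lam\<bar> \<le> sqrt (1 + s\<^sup>2)"
proof -
  have spd: "sym_pos_def n A_R"
    unfolding A_R_def using toeplitz_of_real_sym_pos_def[OF integrable_Re[OF f] pos] .
  have persym: "exchange_mat n * A_R * exchange_mat n = A_R"
    unfolding A_R_def exchange_mat_conj_toeplitz toeplitz_of_real_symmetric ..
  have skew: "\<And>v. v \<in> carrier_vec n \<Longrightarrow> v \<bullet> (A *\<^sub>v v) = v \<bullet> (A_R *\<^sub>v v)"
    unfolding A_def A_R_def by (rule toeplitz_quadratic_form_Re[OF f])
  have A: "A \<in> carrier_mat n n"
    unfolding A_def by (rule toeplitz_carrier)
  note bounds = spd_persymmetric_eigenvalue_bounds[OF spd exchange_mat_carrier transpose_exchange_mat
      exchange_mat_square persym A, folded H_def]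
  have "H \<in> carrier_mat n n"
    using A spd_inv_sqrt(1)[OF spd] exchange_mat_carrier[of n] unfolding H_def by (meson mult_carrier_mat)
  then show "finite {lam. eigenvalue H lam}"
    by (rule finite_eigenvalues)
  show "1 \<le> \<bar>lam\<bar>" if "eigenvalue H lam"
    by (rule bounds(1)) (use skew that in auto)
  show "\<bar>lam\<bar> \<le> sqrt (1 + s\<^sup>2)"
    if "eigenvalue H lam" "0 \<le> s" "AE t in circle_measure. \<bar>Im (f t)\<bar> \<le> s * Re (f t)"
  proof -
    have "AE t in circle_measure. 0 \<le> Re (f t) \<and> \<bar>Im (f t)\<bar> \<le> s * Re (f t)"
      using that(3) pos by eventually_elim simp
    note bnd = toeplitz_skew_part_bound[OF f that(2) this, where n = n, folded A_def A_R_def]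
    show ?thesis
      by (rule bounds(2)) (use skew that(1) bnd in auto)
  qed
qed

section \<open>The essential supremum of the ratio\<close>

lemma esssup_nonneg:
  fixes f :: "'a \<Rightarrow> ereal"
  assumes M: "emeasure M (space M) \<noteq> 0" and f: "\<And>x. 0 \<le> f x"
  shows "0 \<le> esssup M f"
proof (rule ccontr)
  assume neg: "\<not> 0 \<le> esssup M f"
  have "AE x in M. f x \<le> esssup M f"
    by (rule esssup_AE)
  then have "AE x in M. False"
    by eventually_elim (use f neg in \<open>meson order_trans\<close>)
  then show False
    using M ae_filter_eq_bot_iff[of M] by (simp add: eventually_False)
qed

lemma esssup_ratio_bound:
  fixes f :: "'a \<Rightarrow> complex"
  assumes pos: "AE t in M. 0 < Re (f t)"
    and S: "esssup M (\<lambda>t. ereal \<bar>Im (f t) / Re (f t)\<bar>) = ereal s"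
  shows "AE t in M. \<bar>Im (f t)\<bar> \<le> s * Re (f t)"
proof -
  have "AE t in M. ereal \<bar>Im (f t) / Re (f t)\<bar> \<le> ereal s"
    using esssup_AE[of "\<lambda>t. ereal \<bar>Im (f t) / Re (f t)\<bar>" M] unfolding S .
  with pos show ?thesis
    by eventually_elim (simp add: abs_divide divide_le_eq)
qed

lemma annulus_width_exists:
  fixes S :: ereal and L :: "real set"
  assumes L: "finite L" and S: "0 \<le> S"
    and inner: "\<And>l. l \<in> L \<Longrightarrow> 1 \<le> \<bar>l\<bar>"
    and outer: "\<And>s l. S = ereal s \<Longrightarrow> l \<in> L \<Longrightarrow> \<bar>l\<bar> \<le> sqrt (1 + s\<^sup>2)"
  shows "\<exists>\<epsilon>. 0 \<le> \<epsilon> \<and> ereal \<epsilon> \<le> S \<and> (S \<noteq> 0 \<longrightarrow> ereal \<epsilon> < S) \<and> (\<forall>l\<in>L. l \<in> {-1-\<epsilon>..-1} \<union> {1..1+\<epsilon>})"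
proof (cases S)
  case (real s)
  define \<epsilon> where "\<epsilon> = sqrt (1 + s\<^sup>2) - 1"
  have s: "0 \<le> s"
    using S real by simp
  have "sqrt (1 + s\<^sup>2) \<le> 1 + s" "s \<noteq> 0 \<Longrightarrow> sqrt (1 + s\<^sup>2) < 1 + s"
    using s by (auto intro!: real_le_lsqrt real_less_lsqrt simp: power2_eq_square algebra_simps)
  then have "0 \<le> \<epsilon>" "\<epsilon> \<le> s" "s \<noteq> 0 \<Longrightarrow> \<epsilon> < s"
    by (auto simp: \<epsilon>_def)
  moreover have "l \<in> {-1-\<epsilon>..-1} \<union> {1..1+\<epsilon>}" if "l \<in> L" for l
    using inner[OF that] outer[OF real that] by (auto simp: \<epsilon>_def)
  ultimately show ?thesis
    using real by (intro exI[of _ \<epsilon>]) auto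
next
  case PInf
  define \<epsilon> where "\<epsilon> = Max (insert 1 (abs ` L)) - 1"
  have le: "\<bar>l\<bar> \<le> 1 + \<epsilon>" if "l \<in> L" for l
    using L that by (simp add: \<epsilon>_def)
  have "l \<in> {-1-\<epsilon>..-1} \<union> {1..1+\<epsilon>}" if "l \<in> L" for l
    using inner[OF that] le[OF that] by (cases "0 \<le> l") auto
  moreover have "0 \<le> \<epsilon>"
    using L by (simp add: \<epsilon>_def)
  ultimately show ?thesis
    using PInf by (intro exI[of _ \<epsilon>]) auto
next
  case MInf
  then show ?thesis
    using S by simp
qed

theorem theorem3p4:
  fixes f :: "real \<Rightarrow> complex" and n :: nat
  assumes integrable: "set_integrable lborel {-pi..pi} f"
    and real_coeffs: "\<forall>k::int. Im (fourier_coeff f k) = 0"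
    and fR_pos: "AE t in lborel. t \<in> {-pi..pi} \<longrightarrow> Re (f t) > 0"
  defines "A \<equiv> map_mat Re (toeplitz n f)"
    and "A_R \<equiv> map_mat Re (toeplitz n (\<lambda>t. complex_of_real (Re (f t))))"
    and "S \<equiv> esssup (restrict_space lborel {-pi..pi}) (\<lambda>t. ereal \<bar>Im (f t) / Re (f t)\<bar>)"
  shows "\<exists>\<epsilon>::real. 0 \<le> \<epsilon> \<and> ereal \<epsilon> \<le> S \<and>
           ((\<not> (AE t in lborel. t \<in> {-pi..pi} \<longrightarrow> Im (f t) = 0)) \<longrightarrow> ereal \<epsilon> < S) \<and>
           (\<forall>lam. eigenvalue (spd_inv_sqrt n A_R * (exchange_mat n * A) * spd_inv_sqrt n A_R) lam
                 \<longrightarrow> lam \<in> {-1-\<epsilon>..-1} \<union> {1..1+\<epsilon>})"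
proof -
  let ?H = "spd_inv_sqrt n A_R * (exchange_mat n * A) * spd_inv_sqrt n A_R"
  have f: "integrable circle_measure f"
    using integrable by (simp add: set_integrable_iff_circle)
  have pos: "AE t in circle_measure. 0 < Re (f t)"
    using fR_pos by (simp add: AE_circle_iff)
  note H = toeplitz_congruence_eigenvalue_bounds[OF f pos, where n = n, folded A_def A_R_def]
  have S_nonneg: "0 \<le> S"
    unfolding S_def by (rule esssup_nonneg) (use emeasure_circle in auto)
  have ratio: "AE t in circle_measure. \<bar>Im (f t)\<bar> \<le> s * Re (f t)" if "S = ereal s" for s
    using esssup_ratio_bound[OF pos] that by (simp add: S_def)
  have outer: "\<bar>lam\<bar> \<le> sqrt (1 + s\<^sup>2)" if "S = ereal s" "lam \<in> {lam. eigenvalue ?H lam}" for s lam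
    using H(3) ratio[OF that(1)] S_nonneg that by auto
  have "S \<noteq> 0" if "\<not> (AE t in lborel. t \<in> {-pi..pi} \<longrightarrow> Im (f t) = 0)"
    using ratio[of 0] that by (auto simp: AE_circle_iff zero_ereal_def)
  moreover obtain \<epsilon> where "0 \<le> \<epsilon>" "ereal \<epsilon> \<le> S" "S \<noteq> 0 \<longrightarrow> ereal \<epsilon> < S"
    "\<forall>l\<in>{lam. eigenvalue ?H lam}. l \<in> {-1-\<epsilon>..-1} \<union> {1..1+\<epsilon>}"
    using annulus_width_exists[OF H(1) S_nonneg H(2) outer] by auto
  ultimately show ?thesis
    by (intro exI[of _ \<epsilon>]) auto
qed

end
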